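(* Let $E$ be a finite set, $V \subset \mathbb R^E$ a linear subspace with oriented matroid $M$, and $Y_V$ its matroid Schubert variety. If $F \subset G \subset E$ are flats of $M$, then \[ Y_V \cap (0^F \times \mathbb R_{>0}^{G\setminus F} \times \infty^{E \setminus G}) = \big(\pi_G(V) \cap (0^F \times \mathbb R_{>0}^{G\setminus F})\big) \times \infty^{E \setminus G}. \] In particular, $Y_V \cap (0^F \times \mathbb R_{>0}^{G \setminus F} \times \infty^{E \setminus G})$ is nonempty if and only if $F$ is an acyclic flat of $M|_G$.
   Context: $\mathbb P^1_{\mathbb R} = \mathbb R \cup\{\infty\}$; $Y_V$ is the Zariski closure of $V$ in $(\mathbb P^1_{\mathbb R})^E$. Notation $0^A \times S^B \times \infty^C$ (for a partition $E = A\sqcup B\sqcup C$) means points whose coordinates are $0$ on $A$, in $S$ on $B$, and $\infty$ on $C$; similarly in $\mathbb R^G$. $\pi_G:\mathbb R^E \to \mathbb R^G$ is the coordinate projection. The oriented matroid $M$ of $V$ has covectors the sign vectors $s(v)\in\{-,0,+\}^E$ of $v \in V$; flats are zero sets of covectors. $M|_G$ is the oriented matroid on $G$ with covectors the restrictions to $G$ of covectors of $M$ (equivalently the oriented matroid of $\pi_G(V)$). $F$ is an acyclic flat of $M|_G$ if the sign vector that is $0$ on $F$ and $+$ on $G\setminus F$ is a covector of $M|_G$. *)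

theory Defs
  imports "HOL-Analysis.Analysis"
begin

datatype pone = Fin real | Infty

text \<open>Fixed homogeneous coordinates: Fin r \<mapsto> [r : 1], Infty \<mapsto> [1 : 0].\<close>
fun hx :: "pone \<Rightarrow> real" where
  "hx (Fin r) = r" | "hx Infty = 1"
fun hy :: "pone \<Rightarrow> real" where
  "hy (Fin r) = 1" | "hy Infty = 0"

text \<open>A multihomogeneous polynomial in variables (x_e, y_e), e \<in> E, of multidegree d,
  given by a finite set S of exponent vectors a (exponent a e of x_e, d e - a e of y_e)
  with coefficients c.\<close>
definition mh_poly :: "('e::finite \<Rightarrow> nat) \<Rightarrow> ('e \<Rightarrow> nat) set \<Rightarrow> bool" where
  "mh_poly d S \<longleftrightarrow> finite S \<and> (\<forall>a\<in>S. \<forall>e. a e \<le> d e)"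

definition mh_eval ::
  "('e::finite \<Rightarrow> nat) \<Rightarrow> ('e \<Rightarrow> nat) set \<Rightarrow> (('e \<Rightarrow> nat) \<Rightarrow> real) \<Rightarrow> ('e \<Rightarrow> pone) \<Rightarrow> real" where
  "mh_eval d S c p = (\<Sum>a\<in>S. c a * (\<Prod>e\<in>UNIV. hx (p e) ^ a e * hy (p e) ^ (d e - a e)))"

definition zariski_closure_P1 :: "('e::finite \<Rightarrow> pone) set \<Rightarrow> ('e \<Rightarrow> pone) set" where
  "zariski_closure_P1 A = {p. \<forall>d S c. mh_poly d S \<and> (\<forall>q\<in>A. mh_eval d S c q = 0)
                                      \<longrightarrow> mh_eval d S c p = 0}"

definition embed_P1 :: "real ^ 'e \<Rightarrow> ('e \<Rightarrow> pone)" where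
  "embed_P1 v = (\<lambda>e. Fin (v $ e))"

definition schubert_variety :: "(real ^ 'e::finite) set \<Rightarrow> ('e \<Rightarrow> pone) set" where
  "schubert_variety V = zariski_closure_P1 (embed_P1 ` V)"

datatype sign = Neg | Zero | Pos

definition sign_of :: "real \<Rightarrow> sign" where
  "sign_of r = (if r < 0 then Neg else if r = 0 then Zero else Pos)"

definition sign_vec :: "real ^ 'e \<Rightarrow> ('e \<Rightarrow> sign)" where
  "sign_vec v = (\<lambda>e. sign_of (v $ e))"

definition covectors :: "(real ^ 'e) set \<Rightarrow> ('e \<Rightarrow> sign) set" where
  "covectors V = sign_vec ` V"

definition is_flat :: "(real ^ 'e) set \<Rightarrow> 'e set \<Rightarrow> bool" where
  "is_flat V F \<longleftrightarrow> (\<exists>X\<in>covectors V. F = {e. X e = Zero})"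

definition restr_covectors :: "(real ^ 'e) set \<Rightarrow> 'e set \<Rightarrow> ('e \<Rightarrow> sign option) set" where
  "restr_covectors V G = (\<lambda>X. \<lambda>e. if e \<in> G then Some (X e) else None) ` covectors V"

definition acyclic_flat_restr :: "(real ^ 'e) set \<Rightarrow> 'e set \<Rightarrow> 'e set \<Rightarrow> bool" where
  "acyclic_flat_restr V G F \<longleftrightarrow> F \<subseteq> G \<and>
     (\<lambda>e. if e \<in> G then Some (if e \<in> F then Zero else Pos) else None) \<in> restr_covectors V G"

end

theory Submission
  imports Defs
begin

(* If u \<in> V vanishes exactly on the flat G, then v + t u \<rightarrow> (v on G, \<infinity> off G) as t \<rightarrow> \<infinity>;
   after rescaling homogeneous coordinates every multihomogeneous polynomial is continuous
   along this curve, so a polynomial vanishing on V vanishes at the limit. Conversely, the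
   linear forms in the coordinates indexed by G are multihomogeneous polynomials, so a point
   of Y_V that is finite on G satisfies every linear relation of \<pi>_G(V), and lies in
   \<pi>_G(V) because a subspace is its own double orthogonal complement. *)

definition mh_eval_hom ::
  "('e::finite \<Rightarrow> nat) \<Rightarrow> ('e \<Rightarrow> nat) set \<Rightarrow> (('e \<Rightarrow> nat) \<Rightarrow> real) \<Rightarrow> ('e \<Rightarrow> real) \<Rightarrow> ('e \<Rightarrow> real) \<Rightarrow> real" where
  "mh_eval_hom d S c X Y = (\<Sum>a\<in>S. c a * (\<Prod>e\<in>UNIV. X e ^ a e * Y e ^ (d e - a e)))"

lemma mh_eval_eq_hom: "mh_eval d S c p = mh_eval_hom d S c (\<lambda>e. hx (p e)) (\<lambda>e. hy (p e))"
  by (simp add: mh_eval_def mh_eval_hom_def)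

lemma mh_eval_hom_scale:
  assumes "mh_poly d S"
  shows "mh_eval_hom d S c (\<lambda>e. l e * X e) (\<lambda>e. l e * Y e)
           = (\<Prod>e\<in>UNIV. l e ^ d e) * mh_eval_hom d S c X Y"
proof -
  have "(l e * X e) ^ a e * (l e * Y e) ^ (d e - a e) = l e ^ d e * (X e ^ a e * Y e ^ (d e - a e))"
    if "a \<in> S" for a e
  proof -
    have "l e ^ a e * l e ^ (d e - a e) = l e ^ d e"
      using assms that by (simp add: mh_poly_def flip: power_add)
    then show ?thesis by (simp add: power_mult_distrib algebra_simps)
  qed
  then have "(\<Prod>e\<in>UNIV. (l e * X e) ^ a e * (l e * Y e) ^ (d e - a e))
      = (\<Prod>e\<in>UNIV. l e ^ d e) * (\<Prod>e\<in>UNIV. X e ^ a e * Y e ^ (d e - a e))" if "a \<in> S" for a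
    using that by (simp add: prod.distrib)
  then show ?thesis
    by (simp add: mh_eval_hom_def sum_distrib_left algebra_simps cong: sum.cong)
qed

lemma zariski_closure_P1_tendsto:
  assumes "F \<noteq> bot"
    and "\<And>e. ((\<lambda>s. X s e) \<longlongrightarrow> hx (p e)) F" and "\<And>e. ((\<lambda>s. Y s e) \<longlongrightarrow> hy (p e)) F"
    and "\<forall>\<^sub>F s in F. \<exists>q\<in>A. \<exists>l. X s = (\<lambda>e. l e * hx (q e)) \<and> Y s = (\<lambda>e. l e * hy (q e))"
  shows "p \<in> zariski_closure_P1 A"
  unfolding zariski_closure_P1_def
proof (intro CollectI allI impI, elim conjE)
  fix d S c
  assume mh: "mh_poly d S" and vanish: "\<forall>q\<in>A. mh_eval d S c q = 0"
  have "((\<lambda>s. mh_eval_hom d S c (X s) (Y s)) \<longlongrightarrow> mh_eval d S c p) F"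
    unfolding mh_eval_eq_hom mh_eval_hom_def by (intro tendsto_intros assms)
  moreover have "\<forall>\<^sub>F s in F. mh_eval_hom d S c (X s) (Y s) = 0"
    using assms(4) by eventually_elim
      (auto simp: mh_eval_hom_scale[OF mh] vanish mh_eval_eq_hom[symmetric])
  then have "((\<lambda>s. mh_eval_hom d S c (X s) (Y s)) \<longlongrightarrow> 0) F"
    by (rule tendsto_eventually)
  ultimately show "mh_eval d S c p = 0"
    using assms(1) tendsto_unique by blast
qed

lemma linear_form_mh_poly:
  fixes G :: "'e::finite set" and z :: "'e \<Rightarrow> real"
  obtains d S c where "mh_poly d S"
    and "\<And>q. (\<And>e. e \<in> G \<Longrightarrow> hy (q e) = 1) \<Longrightarrow> mh_eval d S c q = (\<Sum>e\<in>G. z e * hx (q e))"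
proof
  define \<delta> where "\<delta> e = (\<lambda>f. if f = e then 1 else 0 :: nat)" for e :: 'e
  define d where "d f = (if f \<in> G then 1 else 0 :: nat)" for f
  define c where "c a = (\<Sum>e\<in>G. if a = \<delta> e then z e else 0)" for a
  have inj: "inj_on \<delta> G"
    by (auto simp: inj_on_def \<delta>_def fun_eq_iff split: if_splits)
  show "mh_poly d (\<delta> ` G)"
    by (auto simp: mh_poly_def \<delta>_def d_def)
  fix q assume hy: "\<And>e. e \<in> G \<Longrightarrow> hy (q e) = 1"
  have "c (\<delta> e) = z e" if "e \<in> G" for e
  proof -
    have "\<delta> e = \<delta> e' \<longleftrightarrow> e' = e" for e'
      by (auto simp: \<delta>_def fun_eq_iff)
    then show ?thesis using that by (simp add: c_def)
  qed
  moreover have "(\<Prod>f\<in>UNIV. hx (q f) ^ \<delta> e f * hy (q f) ^ (d f - \<delta> e f)) = hx (q e)"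
    if "e \<in> G" for e
  proof -
    have "(\<Prod>f\<in>UNIV. hx (q f) ^ \<delta> e f * hy (q f) ^ (d f - \<delta> e f))
        = (\<Prod>f\<in>UNIV. if f = e then hx (q e) else 1)"
      using that hy by (intro prod.cong) (auto simp: \<delta>_def d_def)
    then show ?thesis by simp
  qed
  ultimately show "mh_eval d (\<delta> ` G) c q = (\<Sum>e\<in>G. z e * hx (q e))"
    by (simp add: mh_eval_def sum.reindex[OF inj])
qed

lemma is_flatE:
  assumes "is_flat V G"
  obtains u where "u \<in> V" "\<And>e. u $ e = 0 \<longleftrightarrow> e \<in> G"
  using assms that by (force simp: is_flat_def covectors_def sign_vec_def sign_of_def)

lemma sign_of_eq_Zero_iff [simp]: "sign_of r = Zero \<longleftrightarrow> r = 0"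
  and sign_of_eq_Pos_iff [simp]: "sign_of r = Pos \<longleftrightarrow> r > 0"
  by (auto simp: sign_of_def)

lemma inner_vec_restrict:
  fixes z :: "real ^ 'e::finite"
  shows "inner z (\<chi> e. if e \<in> G then f e else 0) = (\<Sum>e\<in>G. z $ e * f e)"
  by (simp add: inner_vec_def if_distrib sum.If_cases)

lemma schubert_variety_Infty_off_flat:
  assumes V: "subspace V" and "is_flat V G" and v: "v \<in> V"
  shows "(\<lambda>e. if e \<in> G then Fin (v $ e) else Infty) \<in> schubert_variety V"
    (is "?p \<in> _")
proof -
  obtain u where u: "u \<in> V" "\<And>e. u $ e = 0 \<longleftrightarrow> e \<in> G"
    using is_flatE[OF \<open>is_flat V G\<close>] by blast
  define l where "l s e = (if e \<in> G then 1 else s / (s * v $ e + u $ e))" for s :: real and e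
  define X where "X s e = (if e \<in> G then v $ e else 1)" for s :: real and e
  have "((\<lambda>s. l s e) \<longlongrightarrow> hy (?p e)) (at 0)" for e
  proof (cases "e \<in> G")
    case False
    then have "((\<lambda>s. s / (s * v $ e + u $ e)) \<longlongrightarrow> 0 / (0 * v $ e + u $ e)) (at 0)"
      using u(2) by (intro tendsto_intros) auto
    with False show ?thesis by (simp add: l_def)
  qed (simp add: l_def)
  moreover have "((\<lambda>s. X s e) \<longlongrightarrow> hx (?p e)) (at 0)" for e
    by (simp add: X_def)
  moreover have "\<forall>\<^sub>F s in at 0. s \<noteq> 0 \<and> (\<forall>e. e \<notin> G \<longrightarrow> s * v $ e + u $ e \<noteq> 0)"
  proof -
    have "\<forall>\<^sub>F s in at (0::real). e \<notin> G \<longrightarrow> s * v $ e + u $ e \<noteq> 0" for e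
    proof (cases "e \<in> G")
      case False
      have "((\<lambda>s. s * v $ e + u $ e) \<longlongrightarrow> 0 * v $ e + u $ e) (at (0::real))"
        by (intro tendsto_intros)
      then have "\<forall>\<^sub>F s in at (0::real). s * v $ e + u $ e \<noteq> 0"
        using False u(2) by (intro tendsto_imp_eventually_ne) auto
      then show ?thesis
        by eventually_elim simp
    qed simp
    then have "\<forall>\<^sub>F s in at (0::real). \<forall>e. e \<notin> G \<longrightarrow> s * v $ e + u $ e \<noteq> 0"
      by (rule eventually_all_finite)
    moreover have "\<forall>\<^sub>F s in at (0::real). s \<noteq> 0"
      by (simp add: eventually_at_filter)
    ultimately show ?thesis
      by eventually_elim auto
  qed
  then have "\<forall>\<^sub>F s in at 0. \<exists>q\<in>embed_P1 ` V. \<exists>l'.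
      X s = (\<lambda>e. l' e * hx (q e)) \<and> l s = (\<lambda>e. l' e * hy (q e))"
  proof eventually_elim
    case (elim s)
    have "v + (1 / s) *\<^sub>R u \<in> V"
      using V v u(1) by (intro subspace_add subspace_scale)
    then have q: "embed_P1 (v + (1 / s) *\<^sub>R u) \<in> embed_P1 ` V"
      by (rule imageI)
    have "X s e = l s e * (v + (1 / s) *\<^sub>R u) $ e" for e
    proof (cases "e \<in> G")
      case False
      then have "s * v $ e + u $ e \<noteq> 0" using elim by blast
      moreover have "(v + (1 / s) *\<^sub>R u) $ e = (s * v $ e + u $ e) / s"
        using elim by (simp add: field_simps)
      ultimately show ?thesis
        using False elim by (simp add: X_def l_def)
    qed (simp add: X_def l_def u(2))
    then show ?case
      by (intro bexI[OF _ q] exI[of _ "l s"]) (simp add: embed_P1_def fun_eq_iff)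
  qed
  ultimately show ?thesis
    unfolding schubert_variety_def by (intro zariski_closure_P1_tendsto) auto
qed

lemma schubert_variety_linear_relation:
  assumes "p \<in> schubert_variety V" and "\<And>e. e \<in> G \<Longrightarrow> hy (p e) = 1"
    and "\<And>v. v \<in> V \<Longrightarrow> (\<Sum>e\<in>G. z e * v $ e) = 0"
  shows "(\<Sum>e\<in>G. z e * hx (p e)) = 0"
proof -
  obtain d S c where mh: "mh_poly d S"
    and eval: "\<And>q. (\<And>e. e \<in> G \<Longrightarrow> hy (q e) = 1) \<Longrightarrow> mh_eval d S c q = (\<Sum>e\<in>G. z e * hx (q e))"
    using linear_form_mh_poly by blast
  have "\<forall>q\<in>embed_P1 ` V. mh_eval d S c q = 0"
    using assms(3) by (auto simp: eval embed_P1_def)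
  then have "mh_eval d S c p = 0"
    using assms(1) mh unfolding schubert_variety_def zariski_closure_P1_def by blast
  then show ?thesis
    using eval assms(2) by simp
qed

lemma schubert_variety_finite_on_imp_proj:
  fixes V :: "(real ^ 'e::finite) set"
  assumes V: "subspace V" and p: "p \<in> schubert_variety V"
    and fin: "\<And>e. e \<in> G \<Longrightarrow> \<exists>r. p e = Fin r"
  shows "\<exists>v\<in>V. \<forall>e\<in>G. p e = Fin (v $ e)"
proof -
  define pr where "pr v = (\<chi> e. if e \<in> G then v $ e else 0)" for v :: "real ^ 'e"
  have "linear pr"
    unfolding pr_def by (auto intro!: linearI simp: vec_eq_iff)
  then have W: "subspace (pr ` V)"
    using V by (rule linear_subspace_image)
  define x where "x = (\<chi> e. if e \<in> G then hx (p e) else 0)"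
  have hy: "hy (p e) = 1" if "e \<in> G" for e
    using fin[OF that] by auto
  have "orthogonal z x" if "z \<in> (pr ` V)\<^sup>\<bottom>" for z
  proof -
    have "(\<Sum>e\<in>G. z $ e * v $ e) = 0" if "v \<in> V" for v
      using \<open>z \<in> _\<close> that by (auto simp: orthogonal_comp_def orthogonal_def pr_def inner_vec_restrict inner_commute)
    then show ?thesis
      using schubert_variety_linear_relation[OF p hy] by (simp add: orthogonal_def x_def inner_vec_restrict)
  qed
  then have "x \<in> pr ` V"
    using orthogonal_comp_self[OF W] by (auto simp: orthogonal_comp_def orthogonal_commute)
  then obtain v where "v \<in> V" "x = pr v" by blast
  moreover have "p e = Fin (x $ e)" if "e \<in> G" for e
    using fin[OF that] that by (auto simp: x_def)
  ultimately show ?thesis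
    by (auto simp: pr_def)
qed

lemma schubert_variety_Infty_off_flat_iff:
  assumes "subspace V" and "is_flat V G"
    and "\<And>e. e \<in> G \<Longrightarrow> \<exists>r. p e = Fin r" and "\<And>e. e \<notin> G \<Longrightarrow> p e = Infty"
  shows "p \<in> schubert_variety V \<longleftrightarrow> (\<exists>v\<in>V. \<forall>e\<in>G. p e = Fin (v $ e))"
proof
  assume "p \<in> schubert_variety V"
  then show "\<exists>v\<in>V. \<forall>e\<in>G. p e = Fin (v $ e)"
    by (rule schubert_variety_finite_on_imp_proj[OF assms(1) _ assms(3)])
next
  assume "\<exists>v\<in>V. \<forall>e\<in>G. p e = Fin (v $ e)"
  then obtain v where "v \<in> V" and "p = (\<lambda>e. if e \<in> G then Fin (v $ e) else Infty)"
    using assms(4) by fastforce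
  then show "p \<in> schubert_variety V"
    using schubert_variety_Infty_off_flat[OF assms(1,2)] by simp
qed

lemma acyclic_flat_restr_iff:
  "acyclic_flat_restr V G F \<longleftrightarrow> F \<subseteq> G \<and> (\<exists>v\<in>V. (\<forall>e\<in>F. v $ e = 0) \<and> (\<forall>e\<in>G - F. v $ e > 0))"
proof -
  have "(\<lambda>e. if e \<in> G then Some (if e \<in> F then Zero else Pos) else None)
        = (\<lambda>e. if e \<in> G then Some (sign_vec v e) else None)
    \<longleftrightarrow> (\<forall>e\<in>F. v $ e = 0) \<and> (\<forall>e\<in>G - F. v $ e > 0)" if "F \<subseteq> G" for v
    using that unfolding fun_eq_iff sign_vec_def by (auto simp: eq_commute[of _ "sign_of _"])
  then show ?thesis
    unfolding acyclic_flat_restr_def restr_covectors_def covectors_def by blast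
qed

theorem lemma3p1:
  fixes V :: "(real ^ 'e::finite) set" and F G :: "'e set"
  assumes "subspace V"
    and "is_flat V F" and "is_flat V G" and "F \<subseteq> G"
  shows "(schubert_variety V \<inter>
           {p. (\<forall>e\<in>F. p e = Fin 0) \<and> (\<forall>e\<in>G - F. \<exists>r>0. p e = Fin r) \<and> (\<forall>e. e \<notin> G \<longrightarrow> p e = Infty)}
         = {p. (\<exists>v\<in>V. \<forall>e\<in>G. p e = Fin (v $ e))
               \<and> (\<forall>e\<in>F. p e = Fin 0) \<and> (\<forall>e\<in>G - F. \<exists>r>0. p e = Fin r) \<and> (\<forall>e. e \<notin> G \<longrightarrow> p e = Infty)})
       \<and> (schubert_variety V \<inter>
           {p. (\<forall>e\<in>F. p e = Fin 0) \<and> (\<forall>e\<in>G - F. \<exists>r>0. p e = Fin r) \<and> (\<forall>e. e \<notin> G \<longrightarrow> p e = Infty)}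
         \<noteq> {} \<longleftrightarrow> acyclic_flat_restr V G F)"
    (is "?Y \<inter> ?B = ?R \<and> _")
proof -
  have "p \<in> ?Y \<longleftrightarrow> (\<exists>v\<in>V. \<forall>e\<in>G. p e = Fin (v $ e))" if "p \<in> ?B" for p
    using that by (intro schubert_variety_Infty_off_flat_iff[OF assms(1,3)]) force+
  then have eq: "?Y \<inter> ?B = ?R"
    by blast
  have "?R \<noteq> {} \<longleftrightarrow> (\<exists>v\<in>V. (\<forall>e\<in>F. v $ e = 0) \<and> (\<forall>e\<in>G - F. v $ e > 0))"
  proof
    assume "?R \<noteq> {}"
    then obtain p v where "p \<in> ?B" "v \<in> V" "\<forall>e\<in>G. p e = Fin (v $ e)"
      by blast
    then show "\<exists>v\<in>V. (\<forall>e\<in>F. v $ e = 0) \<and> (\<forall>e\<in>G - F. v $ e > 0)"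
      using assms(4) by (intro bexI[of _ v]) fastforce+
  next
    assume "\<exists>v\<in>V. (\<forall>e\<in>F. v $ e = 0) \<and> (\<forall>e\<in>G - F. v $ e > 0)"
    then obtain v where "v \<in> V" "\<forall>e\<in>F. v $ e = 0" "\<forall>e\<in>G - F. v $ e > 0"
      by blast
    then have "(\<lambda>e. if e \<in> G then Fin (v $ e) else Infty) \<in> ?R"
      using assms(4) by auto
    then show "?R \<noteq> {}" by (metis empty_iff)
  qed
  then show ?thesis
    using eq assms(4) by (simp add: acyclic_flat_restr_iff)
qed

end
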